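(* Consider an instance of the MSSN-MC-HC problem with $m=|Q|$ sources and costs $c_s>0$, $c_r>0$, for which there exists a feasible solution using exactly one sink. Assume $\frac{c_s}{c_r}\ge \overline{m}(\overline{m}+1)(h_{\max}-1)$ for some integer $\overline{m}$ with $1\le\overline{m}<m$. Then: (1) the number of sinks picked by SmartSelect is at most $\lceil\frac{m}{\overline{m}+1}\rceil$; (2) the approximation ratio of SmartSelect on such instances (cost of its output divided by the optimum cost) is at most $\epsilon+\frac{m}{\overline{m}}$, where $\epsilon\in[0,1)$ is defined by $\lceil\frac{m}{\overline{m}+1}\rceil=\frac{m}{\overline{m}+1}+\epsilon$.
   Context: MSSN-MC-HC problem: given a finite undirected graph $G=(V,E)$ with $V=Q\cup R\cup B$ (pairwise disjoint; $Q$ = sources, $R$ = potential relay locations, $B$ = potential sink locations), costs $c_s$ per sink and $c_r$ per relay, and a positive integer $h_{\max}$, select $B'\subseteq B$, $R'\subseteq R$ such that in the subgraph induced by $Q\cup R'\cup B'$ every source has a path of at most $h_{\max}$ edges to some sink of $B'$ (a feasible solution), minimizing $c_s|B'|+c_r|R'|$. A feasible solution "using exactly one sink" has $|B'|=1$. SmartSelect algorithm: (1) If for some $b\in B$ every source has a path of at most $h_{\max}$ edges to $b$ in the subgraph induced by $Q\cup B$, output $(\{b\},\emptyset)$. (2) If some source has no path of at most $h_{\max}$ edges in $G$ to any sink, declare infeasible. (3) For each $b_i\in B$ let $Q_i$ be the set of sources whose shortest path to $b_i$ in $G$ has at most $h_{\max}$ edges, and $R_i$ the set of relays whose shortest path to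 $b_i$ has at most $h_{\max}-1$ edges. (4) Greedy phase, iterations $j=0,1,\dots$: $B^{(0)}=B$, $Q_i^{(0)}=Q_i$; $B^{(j)}$ is the set of sinks not yet picked and $Q_i^{(j)}$ the set of sources of $Q_i$ not yet covered. In iteration $j$, for each $b_i\in B^{(j)}$, a relay-selection subroutine (e.g. the SPTiRP algorithm) applied to the subgraph of $G$ induced by $Q_i^{(j)}\cup R_i\cup\{b_i\}$ returns a set $\hat R_i^{(j)}\subseteq R_i$ consisting of the relays on one chosen path of at most $h_{\max}$ edges from each source of $Q_i^{(j)}$ to $b_i$. Let $n_i^{(j)}$ be the number of relays in $\hat R_i^{(j)}$ not selected in earlier iterations (earlier-selected relays have cost zero thereafter), and $C_i^{(j)}=\frac{c_s+c_r n_i^{(j)}}{|Q_i^{(j)}|}$. The sink $b_i$ with least $C_i^{(j)}$ is picked (ties broken in favor of larger $|Q_i^{(j)}|$), its sources $Q_i^{(j)}$ become covered and the relays $\hat R_i^{(j)}$ are selected. Stop when all sources are covered; output the picked sinks and selected relays. *)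

theory Defs
  imports Complex_Main
begin

text \<open>A path is a nonempty list of distinct vertices with consecutive vertices adjacent;
  its number of edges is length - 1.  A path "in the subgraph induced by S" has
  all its vertices in S.\<close>

definition is_hpath :: "('v \<times> 'v) set \<Rightarrow> 'v set \<Rightarrow> 'v list \<Rightarrow> 'v \<Rightarrow> 'v \<Rightarrow> bool" where
  "is_hpath E S p u v \<longleftrightarrow> p \<noteq> [] \<and> hd p = u \<and> last p = v \<and> distinct p \<and> set p \<subseteq> S \<and>
     (\<forall>i. Suc i < length p \<longrightarrow> (p ! i, p ! Suc i) \<in> E)"

definition reach_within :: "('v \<times> 'v) set \<Rightarrow> 'v set \<Rightarrow> nat \<Rightarrow> 'v \<Rightarrow> 'v \<Rightarrow> bool" where
  "reach_within E S k u v \<longleftrightarrow> (\<exists>p. is_hpath E S p u v \<and> length p \<le> Suc k)"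

definition mssn_instance ::
  "('v \<times> 'v) set \<Rightarrow> 'v set \<Rightarrow> 'v set \<Rightarrow> 'v set \<Rightarrow> real \<Rightarrow> real \<Rightarrow> nat \<Rightarrow> bool" where
  "mssn_instance E Q R B cs cr h \<longleftrightarrow>
     finite Q \<and> finite R \<and> finite B \<and>
     Q \<inter> R = {} \<and> Q \<inter> B = {} \<and> R \<inter> B = {} \<and>
     E \<subseteq> (Q \<union> R \<union> B) \<times> (Q \<union> R \<union> B) \<and> sym E \<and> (\<forall>x. (x, x) \<notin> E) \<and>
     h \<ge> 1 \<and> cs > 0 \<and> cr > 0"

definition feasible ::
  "('v \<times> 'v) set \<Rightarrow> 'v set \<Rightarrow> 'v set \<Rightarrow> 'v set \<Rightarrow> nat \<Rightarrow> 'v set \<Rightarrow> 'v set \<Rightarrow> bool" where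
  "feasible E Q R B h B' R' \<longleftrightarrow> B' \<subseteq> B \<and> R' \<subseteq> R \<and>
     (\<forall>q\<in>Q. \<exists>b\<in>B'. reach_within E (Q \<union> R' \<union> B') h q b)"

definition cost :: "real \<Rightarrow> real \<Rightarrow> 'v set \<Rightarrow> 'v set \<Rightarrow> real" where
  "cost cs cr B' R' = cs * real (card B') + cr * real (card R')"

definition opt_cost ::
  "('v \<times> 'v) set \<Rightarrow> 'v set \<Rightarrow> 'v set \<Rightarrow> 'v set \<Rightarrow> real \<Rightarrow> real \<Rightarrow> nat \<Rightarrow> real" where
  "opt_cost E Q R B cs cr h = Min {cost cs cr B' R' | B' R'. feasible E Q R B h B' R'}"

definition srcs_of :: "('v \<times> 'v) set \<Rightarrow> 'v set \<Rightarrow> 'v set \<Rightarrow> 'v set \<Rightarrow> nat \<Rightarrow> 'v \<Rightarrow> 'v set" where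
  "srcs_of E Q R B h b = {q \<in> Q. reach_within E (Q \<union> R \<union> B) h q b}"

definition rels_of :: "('v \<times> 'v) set \<Rightarrow> 'v set \<Rightarrow> 'v set \<Rightarrow> 'v set \<Rightarrow> nat \<Rightarrow> 'v \<Rightarrow> 'v set" where
  "rels_of E Q R B h b = {r \<in> R. reach_within E (Q \<union> R \<union> B) (h - 1) r b}"

text \<open>Admissible output X of the relay-selection subroutine applied to the subgraph induced by
  S \<union> R_i \<union> {b}: the relays on one chosen path of at most h edges (in that subgraph)
  from each source of S to b.\<close>
definition subroutine_output ::
  "('v \<times> 'v) set \<Rightarrow> 'v set \<Rightarrow> 'v set \<Rightarrow> 'v set \<Rightarrow> nat \<Rightarrow> 'v set \<Rightarrow> 'v \<Rightarrow> 'v set \<Rightarrow> bool" where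
  "subroutine_output E Q R B h S b X \<longleftrightarrow>
     (\<exists>P. (\<forall>q\<in>S. is_hpath E (S \<union> rels_of E Q R B h b \<union> {b}) (P q) q b \<and> length (P q) \<le> Suc h)
          \<and> X = (\<Union>q\<in>S. set (P q)) \<inter> R)"

text \<open>Sinks with no uncovered source in Q_i
  are not candidates (their ratio would be undefined).\<close>
definition greedy_step ::
  "('v \<times> 'v) set \<Rightarrow> 'v set \<Rightarrow> 'v set \<Rightarrow> 'v set \<Rightarrow> real \<Rightarrow> real \<Rightarrow> nat \<Rightarrow>
   'v set \<Rightarrow> 'v set \<Rightarrow> 'v set \<Rightarrow> 'v set \<Rightarrow> 'v set \<Rightarrow> 'v set \<Rightarrow> bool" where
  "greedy_step E Q R B cs cr h Cov Pk Sel Cov' Pk' Sel' \<longleftrightarrow>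
     Cov \<noteq> Q \<and>
     (let cand = {b \<in> B - Pk. srcs_of E Q R B h b - Cov \<noteq> {}} in
      \<exists>out b0.
        (\<forall>b\<in>cand. subroutine_output E Q R B h (srcs_of E Q R B h b - Cov) b (out b)) \<and>
        (let ratio = (\<lambda>b. (cs + cr * real (card (out b - Sel))) / real (card (srcs_of E Q R B h b - Cov)))
         in b0 \<in> cand \<and>
            (\<forall>b\<in>cand. ratio b0 < ratio b \<or>
               (ratio b0 = ratio b \<and> card (srcs_of E Q R B h b - Cov) \<le> card (srcs_of E Q R B h b0 - Cov)))) \<and>
        Cov' = Cov \<union> srcs_of E Q R B h b0 \<and> Pk' = insert b0 Pk \<and> Sel' = Sel \<union> out b0)"

definition greedy_rel ::
  "('v \<times> 'v) set \<Rightarrow> 'v set \<Rightarrow> 'v set \<Rightarrow> 'v set \<Rightarrow> real \<Rightarrow> real \<Rightarrow> nat \<Rightarrow>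
   'v set \<times> 'v set \<times> 'v set \<Rightarrow> 'v set \<times> 'v set \<times> 'v set \<Rightarrow> bool" where
  "greedy_rel E Q R B cs cr h = (\<lambda>(Cov, Pk, Sel) (Cov', Pk', Sel').
      greedy_step E Q R B cs cr h Cov Pk Sel Cov' Pk' Sel')"

text \<open>(B', R') is a possible output of SmartSelect (for some admissible subroutine outputs and
  some resolution of the remaining ties).\<close>
definition smartselect_output ::
  "('v \<times> 'v) set \<Rightarrow> 'v set \<Rightarrow> 'v set \<Rightarrow> 'v set \<Rightarrow> real \<Rightarrow> real \<Rightarrow> nat \<Rightarrow> 'v set \<Rightarrow> 'v set \<Rightarrow> bool" where
  "smartselect_output E Q R B cs cr h B' R' \<longleftrightarrow>
     (if \<exists>b\<in>B. \<forall>q\<in>Q. reach_within E (Q \<union> B) h q b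
      then (\<exists>b\<in>B. (\<forall>q\<in>Q. reach_within E (Q \<union> B) h q b) \<and> B' = {b} \<and> R' = {})
      else (\<forall>q\<in>Q. \<exists>b\<in>B. reach_within E (Q \<union> R \<union> B) h q b) \<and>
           (greedy_rel E Q R B cs cr h)\<^sup>*\<^sup>* ({}, {}, {}) (Q, B', R'))"

end

theory Submission
  imports Defs
begin

text \<open>A feasible one-sink solution yields a sink b* that reaches every source, so b* stays a
  candidate throughout the greedy phase and its ratio is at most c_s/k + c_r(h-1) when k sources
  are uncovered. Since c_r(h-1) \<le> c_s/(t(t+1)) \<le> c_s/t - c_s/k for t \<le> mb < k, a picked sink
  covering only t \<le> mb new sources would lose to b*; hence every pick but the last covers at
  least mb + 1 new sources, bounding the number of sinks. Every covered source contributes at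
  most h - 1 relays, and any solution costs at least c_s, which gives the ratio.\<close>

lemma reach_within_mono:
  "reach_within E S k u v \<Longrightarrow> S \<subseteq> T \<Longrightarrow> reach_within E T k u v"
  unfolding reach_within_def is_hpath_def by blast

lemma card_hpath_interior:
  assumes "is_hpath E S p u v" "length p \<le> Suc h" "u \<noteq> v"
  shows "card (set p - {u, v}) \<le> h - 1"
proof -
  from assms(1) have "distinct p" "{u, v} \<subseteq> set p"
    unfolding is_hpath_def by (auto intro: hd_in_set last_in_set)
  then have "card (set p - {u, v}) = length p - 2"
    using assms(3) by (simp add: card_Diff_subset distinct_card)
  with assms(2) show ?thesis by simp
qed

lemma subroutine_output_card:
  assumes "subroutine_output E Q R B h S b X" "finite S" "S \<subseteq> Q" "b \<in> B"
    "Q \<inter> R = {}" "Q \<inter> B = {}" "R \<inter> B = {}"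
  shows "finite X" "card X \<le> card S * (h - 1)"
proof -
  obtain P where P: "\<And>q. q \<in> S \<Longrightarrow>
      is_hpath E (S \<union> rels_of E Q R B h b \<union> {b}) (P q) q b \<and> length (P q) \<le> Suc h"
    and X: "X = (\<Union>q\<in>S. set (P q) \<inter> R)"
    using assms(1) unfolding subroutine_output_def by blast
  have per_source: "card (set (P q) \<inter> R) \<le> h - 1" if "q \<in> S" for q
  proof -
    have "card (set (P q) \<inter> R) \<le> card (set (P q) - {q, b})"
      using that assms(3-7) by (intro card_mono) auto
    also have "\<dots> \<le> h - 1"
    proof (rule card_hpath_interior)
      show "q \<noteq> b" using that assms(3,4,6) by auto
    qed (use P[OF that] in blast)+
    finally show ?thesis .
  qed
  show "finite X" unfolding X using assms(2) by simp
  have "card X \<le> (\<Sum>q\<in>S. card (set (P q) \<inter> R))"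
    unfolding X by (rule card_UN_le[OF assms(2)])
  also have "\<dots> \<le> card S * (h - 1)"
    using sum_bounded_above[of S _ "h - 1"] per_source by simp
  finally show "card X \<le> card S * (h - 1)" .
qed

lemma feasible_single_sink_reaches_all:
  assumes "feasible E Q R B h {b} R'" "b \<in> B"
  shows "srcs_of E Q R B h b = Q"
  using assms unfolding feasible_def srcs_of_def
  by (auto elim!: reach_within_mono)

text \<open>The gap c_s/t - c_s/(t+1) = c_s/(t(t+1)) absorbs the relay cost c once t \<le> mb.\<close>
lemma divide_add_le_divide_smaller:
  fixes cs c :: real and t k mb :: nat
  assumes "0 < cs" "0 \<le> c" "c * (real mb * (real mb + 1)) \<le> cs" "1 \<le> t" "t \<le> mb" "t < k"
  shows "cs / real k + c \<le> cs / real t"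
proof -
  have "c \<le> cs / (real mb * (real mb + 1))"
    using assms by (simp add: pos_le_divide_eq)
  also have "\<dots> \<le> cs / (real t * (real t + 1))"
    using assms by (intro divide_left_mono mult_mono) auto
  also have "\<dots> = cs / real t - cs / (real t + 1)"
    using assms by (simp add: field_simps)
  also have "\<dots> \<le> cs / real t - cs / real k"
    using assms by (simp add: divide_left_mono)
  finally show ?thesis by simp
qed

lemma int_le_ceiling_divide_Suc:
  fixes n m d :: nat
  assumes "(d + 1) * n \<le> m + d"
  shows "int n \<le> \<lceil>real m / (real d + 1)\<rceil>"
proof -
  have "(real n - 1) * (real d + 1) < real m"
    using assms by (simp add: algebra_simps flip: of_nat_add of_nat_mult)
  then have "real n - 1 < real m / (real d + 1)"
    by (simp add: pos_less_divide_eq)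
  then show ?thesis by (simp add: le_ceiling_iff)
qed

lemma full_cover_ratio_le:
  fixes cs cr :: real and h mb rk rt t k :: nat
  assumes "0 < cs" "0 < cr" "cr * real (h - 1) * (real mb * (real mb + 1)) \<le> cs"
    "rk \<le> k * (h - 1)" "1 \<le> t" "t \<le> mb" "t < k"
  shows "(cs + cr * rk) / k \<le> (cs + cr * rt) / t"
proof -
  have "(cs + cr * rk) / k \<le> (cs + cr * (k * (h - 1))) / k"
    using assms by (intro divide_right_mono add_left_mono mult_left_mono)
      (auto simp flip: of_nat_mult)
  also have "\<dots> = cs / k + cr * (h - 1)"
    using \<open>t < k\<close> by (simp add: field_simps)
  also have "\<dots> \<le> cs / t"
    using divide_add_le_divide_smaller assms by (simp add: mult.commute)
  also have "\<dots> \<le> (cs + cr * rt) / t"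
    using \<open>cr > 0\<close> by (intro divide_right_mono) auto
  finally show ?thesis .
qed

lemma greedy_step_progress:
  assumes inst: "mssn_instance E Q R B cs cr h"
    and universal: "bs \<in> B - Pk" "srcs_of E Q R B h bs = Q"
    and cheap_relays: "cr * real (h - 1) * (real mb * (real mb + 1)) \<le> cs"
    and "Cov \<subseteq> Q"
    and step: "greedy_step E Q R B cs cr h Cov Pk Sel Cov' Pk' Sel'"
  obtains b0 X where "b0 \<in> B - Pk" "subroutine_output E Q R B h (srcs_of E Q R B h b0 - Cov) b0 X"
    "Cov' = Cov \<union> srcs_of E Q R B h b0" "Pk' = insert b0 Pk" "Sel' = Sel \<union> X"
    "mb + 1 \<le> card (srcs_of E Q R B h b0 - Cov) \<or> Cov' = Q"
proof -
  have fQ: "finite Q" and disj: "Q \<inter> R = {}" "Q \<inter> B = {}" "R \<inter> B = {}"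
    and "cs > 0" "cr > 0"
    using inst unfolding mssn_instance_def by auto
  define new where "new b = srcs_of E Q R B h b - Cov" for b
  define cand where "cand = {b \<in> B - Pk. new b \<noteq> {}}"
  have new_sub: "new b \<subseteq> Q - Cov" for b
    unfolding new_def srcs_of_def by auto
  then have fin_new: "finite (new b)" for b
    using fQ finite_subset by blast
  from step obtain out b0 where "Cov \<noteq> Q"
    and out: "\<And>b. b \<in> cand \<Longrightarrow> subroutine_output E Q R B h (new b) b (out b)"
    and b0: "b0 \<in> cand"
    and picked: "\<And>b. b \<in> cand \<Longrightarrow>
        (cs + cr * card (out b0 - Sel)) / card (new b0) < (cs + cr * card (out b - Sel)) / card (new b)
      \<or> ((cs + cr * card (out b0 - Sel)) / card (new b0) = (cs + cr * card (out b - Sel)) / card (new b)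
          \<and> card (new b) \<le> card (new b0))"
    and updates: "Cov' = Cov \<union> srcs_of E Q R B h b0" "Pk' = insert b0 Pk" "Sel' = Sel \<union> out b0"
    unfolding greedy_step_def Let_def cand_def new_def by blast
  define t k where "t = card (new b0)" and "k = card (Q - Cov)"
  have new_bs: "new bs = Q - Cov" and bs: "bs \<in> cand"
    using universal \<open>Cov \<subseteq> Q\<close> \<open>Cov \<noteq> Q\<close> unfolding cand_def new_def by auto
  have "t \<ge> 1"
    using b0 fin_new unfolding cand_def t_def by (simp add: Suc_le_eq card_gt_0_iff)
  have "mb + 1 \<le> t \<or> k \<le> t"
  proof (rule ccontr)
    assume "\<not> ?thesis"
    then have "t \<le> mb" "t < k" by auto
    have "new bs \<subseteq> Q" "bs \<in> B"
      using new_sub universal by auto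
    from subroutine_output_card[OF out[OF bs] fin_new this disj]
    have "card (out bs - Sel) \<le> k * (h - 1)"
      unfolding new_bs k_def by (meson Diff_subset card_mono le_trans)
    from full_cover_ratio_le[where rt = "card (out b0 - Sel)", OF \<open>cs > 0\<close> \<open>cr > 0\<close> cheap_relays this \<open>t \<ge> 1\<close> \<open>t \<le> mb\<close> \<open>t < k\<close>]
    show False
      using picked[OF bs] \<open>t < k\<close> unfolding new_bs t_def k_def by linarith
  qed
  moreover have "Cov' = Q" if "k \<le> t"
  proof -
    have "new b0 = Q - Cov"
      using card_seteq[OF _ new_sub] fQ that unfolding t_def k_def by blast
    then show ?thesis
      using updates(1) \<open>Cov \<subseteq> Q\<close> new_sub unfolding new_def srcs_of_def by blast
  qed
  ultimately show thesis
    using that b0 out[OF b0] updates unfolding cand_def new_def t_def by blast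
qed

text \<open>The slack mb on the right pays for the last pick, which may cover fewer than mb + 1
  new sources.\<close>
definition greedy_invariant ::
  "('v \<times> 'v) set \<Rightarrow> 'v set \<Rightarrow> 'v set \<Rightarrow> 'v set \<Rightarrow> nat \<Rightarrow> nat \<Rightarrow> 'v set \<Rightarrow> 'v set \<Rightarrow> 'v set \<Rightarrow> bool"
where
  "greedy_invariant E Q R B h mb Cov Pk Sel \<longleftrightarrow>
     Cov \<subseteq> Q \<and> finite Pk \<and> (\<forall>b\<in>Pk. srcs_of E Q R B h b \<subseteq> Cov) \<and>
     card Sel \<le> card Cov * (h - 1) \<and>
     (mb + 1) * card Pk \<le> card Cov + (if Cov = Q then mb else 0)"

lemma greedy_step_preserves_invariant:
  assumes inst: "mssn_instance E Q R B cs cr h"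
    and universal: "bs \<in> B" "srcs_of E Q R B h bs = Q"
    and cheap_relays: "cr * real (h - 1) * (real mb * (real mb + 1)) \<le> cs"
    and inv: "greedy_invariant E Q R B h mb Cov Pk Sel"
    and step: "greedy_step E Q R B cs cr h Cov Pk Sel Cov' Pk' Sel'"
  shows "greedy_invariant E Q R B h mb Cov' Pk' Sel'"
proof -
  have fQ: "finite Q" and disj: "Q \<inter> R = {}" "Q \<inter> B = {}" "R \<inter> B = {}"
    using inst unfolding mssn_instance_def by auto
  have "Cov \<noteq> Q"
    using step unfolding greedy_step_def by blast
  from inv have "Cov \<subseteq> Q" "finite Pk" and Pk_covered: "\<forall>b\<in>Pk. srcs_of E Q R B h b \<subseteq> Cov"
    and relays: "card Sel \<le> card Cov * (h - 1)" and count: "(mb + 1) * card Pk \<le> card Cov"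
    using \<open>Cov \<noteq> Q\<close> unfolding greedy_invariant_def by auto
  have "bs \<in> B - Pk"
    using universal Pk_covered \<open>Cov \<subseteq> Q\<close> \<open>Cov \<noteq> Q\<close> by auto
  obtain b0 X where b0: "b0 \<in> B - Pk"
    and X: "subroutine_output E Q R B h (srcs_of E Q R B h b0 - Cov) b0 X"
    and updates: "Cov' = Cov \<union> srcs_of E Q R B h b0" "Pk' = insert b0 Pk" "Sel' = Sel \<union> X"
    and progress: "mb + 1 \<le> card (srcs_of E Q R B h b0 - Cov) \<or> Cov' = Q"
    using greedy_step_progress[OF inst \<open>bs \<in> B - Pk\<close> universal(2) cheap_relays \<open>Cov \<subseteq> Q\<close> step] .
  define t where "t = card (srcs_of E Q R B h b0 - Cov)"
  have new_sub: "srcs_of E Q R B h b0 - Cov \<subseteq> Q"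
    unfolding srcs_of_def by auto
  then have fin_new: "finite (srcs_of E Q R B h b0 - Cov)"
    using fQ finite_subset by blast
  have "card (Cov \<union> (srcs_of E Q R B h b0 - Cov)) = card Cov + t"
    unfolding t_def by (rule card_Un_disjoint) (use \<open>Cov \<subseteq> Q\<close> fQ fin_new finite_subset in auto)
  moreover have "Cov' = Cov \<union> (srcs_of E Q R B h b0 - Cov)"
    using updates(1) by blast
  ultimately have card_Cov': "card Cov' = card Cov + t"
    by simp
  have card_Pk': "card Pk' = card Pk + 1"
    using updates(2) b0 \<open>finite Pk\<close> by simp
  have "card X \<le> t * (h - 1)"
    using subroutine_output_card(2)[OF X fin_new new_sub _ disj] b0 unfolding t_def by blast
  then have "card Sel' \<le> card Cov' * (h - 1)"
    using card_Un_le[of Sel X] relays card_Cov' updates(3) by (simp add: add_mult_distrib)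
  moreover have "(mb + 1) * card Pk' \<le> card Cov' + (if Cov' = Q then mb else 0)"
  proof (cases "Cov' = Q")
    case True
    then have "card Cov < card Cov'"
      using \<open>Cov \<subseteq> Q\<close> \<open>Cov \<noteq> Q\<close> fQ by (simp add: psubset_card_mono)
    with True count card_Pk' show ?thesis by simp
  next
    case False
    with progress count card_Cov' card_Pk' show ?thesis unfolding t_def by simp
  qed
  moreover have "Cov' \<subseteq> Q" "finite Pk'" "\<forall>b\<in>Pk'. srcs_of E Q R B h b \<subseteq> Cov'"
    using updates \<open>Cov \<subseteq> Q\<close> \<open>finite Pk\<close> Pk_covered unfolding srcs_of_def by auto
  ultimately show ?thesis
    unfolding greedy_invariant_def by blast
qed

lemma greedy_invariant_reachable:
  assumes inst: "mssn_instance E Q R B cs cr h"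
    and universal: "bs \<in> B" "srcs_of E Q R B h bs = Q"
    and cheap_relays: "cr * real (h - 1) * (real mb * (real mb + 1)) \<le> cs"
    and "(greedy_rel E Q R B cs cr h)\<^sup>*\<^sup>* ({}, {}, {}) (Cov, Pk, Sel)"
  shows "greedy_invariant E Q R B h mb Cov Pk Sel"
  using assms(5)
proof (induction "(Cov, Pk, Sel)" arbitrary: Cov Pk Sel rule: rtranclp_induct)
  case base
  then show ?case by (simp add: greedy_invariant_def)
next
  case (step s)
  obtain Cov0 Pk0 Sel0 where "s = (Cov0, Pk0, Sel0)"
    using prod_cases3 by blast
  with step show ?case
    using greedy_step_preserves_invariant[OF inst universal cheap_relays] by (simp add: greedy_rel_def)
qed

lemma smartselect_output_card_le:
  assumes inst: "mssn_instance E Q R B cs cr h" and "Q \<noteq> {}"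
    and universal: "bs \<in> B" "srcs_of E Q R B h bs = Q"
    and cheap_relays: "cr * real (h - 1) * (real mb * (real mb + 1)) \<le> cs"
    and out: "smartselect_output E Q R B cs cr h B' R'"
  shows "(mb + 1) * card B' \<le> card Q + mb" "card R' \<le> card Q * (h - 1)"
proof -
  have "card Q \<ge> 1"
    using \<open>Q \<noteq> {}\<close> inst unfolding mssn_instance_def by (simp add: Suc_le_eq card_gt_0_iff)
  have "(mb + 1) * card B' \<le> card Q + mb \<and> card R' \<le> card Q * (h - 1)"
  proof (cases "\<exists>b\<in>B. \<forall>q\<in>Q. reach_within E (Q \<union> B) h q b")
    case True
    then obtain b where "B' = {b}" "R' = {}"
      using out unfolding smartselect_output_def by auto
    with \<open>card Q \<ge> 1\<close> show ?thesis by simp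
  next
    case False
    then have "(greedy_rel E Q R B cs cr h)\<^sup>*\<^sup>* ({}, {}, {}) (Q, B', R')"
      using out unfolding smartselect_output_def by auto
    from greedy_invariant_reachable[OF inst universal cheap_relays this]
    show ?thesis unfolding greedy_invariant_def by simp
  qed
  then show "(mb + 1) * card B' \<le> card Q + mb" "card R' \<le> card Q * (h - 1)"
    by auto
qed

lemma cost_ge_sink_cost:
  assumes "cs > 0" "cr > 0" "finite B'" "B' \<noteq> {}"
  shows "cs \<le> cost cs cr B' R'"
proof -
  have "cs \<le> cs * card B'"
    using assms by (simp add: Suc_le_eq card_gt_0_iff)
  then show ?thesis
    unfolding cost_def using \<open>cr > 0\<close> by (simp add: add_increasing2)
qed

lemma opt_cost_ge_sink_cost:
  assumes inst: "mssn_instance E Q R B cs cr h" and "Q \<noteq> {}"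
    and "feasible E Q R B h B0 R0"
  shows "cs \<le> opt_cost E Q R B cs cr h"
proof -
  have fin: "finite B" "finite R" and "cs > 0" "cr > 0"
    using inst unfolding mssn_instance_def by auto
  let ?costs = "{cost cs cr B' R' | B' R'. feasible E Q R B h B' R'}"
  have "?costs \<subseteq> (\<lambda>(B', R'). cost cs cr B' R') ` (Pow B \<times> Pow R)"
    unfolding feasible_def by auto
  then have "finite ?costs"
    by (rule finite_subset) (use fin in simp)
  moreover have "?costs \<noteq> {}"
    using assms(3) by auto
  moreover have "cs \<le> cost cs cr B' R'" if "feasible E Q R B h B' R'" for B' R'
  proof (rule cost_ge_sink_cost[OF \<open>cs > 0\<close> \<open>cr > 0\<close>])
    show "finite B'" "B' \<noteq> {}"
      using that fin \<open>Q \<noteq> {}\<close> unfolding feasible_def by (auto intro: finite_subset)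
  qed
  ultimately show ?thesis
    unfolding opt_cost_def by (auto simp: Min_ge_iff)
qed

theorem theorem1:
  fixes E :: "('v \<times> 'v) set" and Q R B :: "'v set" and cs cr :: real and h mb :: nat
  assumes inst: "mssn_instance E Q R B cs cr h"
    and one_sink: "\<exists>b\<in>B. \<exists>R'. feasible E Q R B h {b} R'"
    and mb: "1 \<le> mb" "mb < card Q"
    and ratio: "cs / cr \<ge> real mb * (real mb + 1) * (real h - 1)"
    and out: "smartselect_output E Q R B cs cr h B' R'"
  shows "card B' \<le> \<lceil>real (card Q) / (real mb + 1)\<rceil>
    \<and> cost cs cr B' R' / opt_cost E Q R B cs cr h
        \<le> (real_of_int \<lceil>real (card Q) / (real mb + 1)\<rceil> - real (card Q) / (real mb + 1))
           + real (card Q) / real mb"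
proof -
  define m where "m = card Q"
  have "cs > 0" "cr > 0" "h \<ge> 1"
    using inst unfolding mssn_instance_def by auto
  have "Q \<noteq> {}"
    using mb by auto
  obtain bs R0 where bs: "bs \<in> B" and fe: "feasible E Q R B h {bs} R0"
    using one_sink by blast
  have "real mb * (real mb + 1) * (real h - 1) * cr \<le> cs"
    using ratio \<open>cr > 0\<close> by (simp add: pos_le_divide_eq)
  then have cheap_relays: "cr * real (h - 1) * (real mb * (real mb + 1)) \<le> cs"
    using \<open>h \<ge> 1\<close> by (simp add: of_nat_diff mult_ac)
  note counts = smartselect_output_card_le[OF inst \<open>Q \<noteq> {}\<close> bs
      feasible_single_sink_reaches_all[OF fe bs] cheap_relays out]
  have sinks: "card B' \<le> \<lceil>real m / (real mb + 1)\<rceil>"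
    using int_le_ceiling_divide_Suc[OF counts(1)] unfolding m_def .
  have "cr * card R' \<le> real m * (cr * real (h - 1))"
    using counts(2) \<open>cr > 0\<close> unfolding m_def by (simp flip: of_nat_mult)
  also have "\<dots> \<le> real m * (cs / (real mb * (real mb + 1)))"
    using cheap_relays mb by (intro mult_left_mono) (simp_all add: pos_le_divide_eq)
  also have "\<dots> = cs * (real m / real mb - real m / (real mb + 1))"
    using mb by (simp add: field_simps)
  finally have "cr * card R' / cs \<le> real m / real mb - real m / (real mb + 1)"
    using \<open>cs > 0\<close> by (metis pos_divide_le_eq mult.commute)
  moreover have "cost cs cr B' R' / cs = card B' + cr * card R' / cs"
    using \<open>cs > 0\<close> unfolding cost_def by (simp add: add_divide_distrib)
  moreover have "cost cs cr B' R' / opt_cost E Q R B cs cr h \<le> cost cs cr B' R' / cs"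
    using opt_cost_ge_sink_cost[OF inst \<open>Q \<noteq> {}\<close> fe] \<open>cs > 0\<close> \<open>cr > 0\<close>
    unfolding cost_def by (intro divide_left_mono) auto
  ultimately show ?thesis
    using sinks unfolding m_def by linarith
qed

end
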